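(* Let $A$ be a finite alphabet and $n\ge1$. The $n$-ball subshift $\mathbb F^{[n]}\curvearrowright\mathcal C^{[n]}$ of the full convex shift $\mathbb F(A)\curvearrowright\mathcal C(A)$ is $1$-step (as a convex subshift over the alphabet $A^{[n]}$).
   Context: Convex subshifts. Let $A$ be a finite alphabet, $\mathbb F=\mathbb F(A)$. $\mathcal C=\mathcal C(A)$ is the set of subsets $\xi\subseteq\mathbb F$ with $1\in\xi$ that are right-convex: whenever a reduced word $a_m^{\varepsilon_m}\cdots a_1^{\varepsilon_1}$ ($a_i\in A$, $\varepsilon_i=\pm1$) lies in $\xi$, so does $a_k^{\varepsilon_k}\cdots a_1^{\varepsilon_1}$ for all $k<m$; topology from $\{0,1\}^{\mathbb F}$. Full convex shift: partial action of $\mathbb F$ on $\mathcal C$ with domains $\mathcal C_\alpha=\{\xi:\alpha^{-1}\in\xi\}$, $\alpha.\xi=\xi\alpha^{-1}$ for $\alpha\in\xi$. A convex subshift is the restriction to a closed invariant $\Omega\subseteq\mathcal C$. An $n$-ball is $B\in\mathcal C$ with all $|\alpha|\le n$, together with radius $n$; $\xi^n=\{\alpha\in\xi:|\alpha|\le n\}$; $\mathcal B_n(\Omega)=\{\xi^n:\xi\in\Omega\}$. For an $n$-ball $B$, $\xi\not\equiv B$ means $(\alpha.\xi)^n\ne B$ for all $\alpha\in\xi$; $\Omega^{\mathcal F}=\{\xi\in\mathcal C:\xi\not\equiv B\ \forall B\in\mathcal F\}$. $\Omega$ is $R$-step if $\Omega=\Omega^{\mathcal F}$ for a finite set $\mathcal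 F$ of $R$-balls (equivalently, $\xi\in\mathcal C$ lies in $\Omega$ iff $(\alpha.\xi)^R\in\mathcal B_R(\Omega)$ for all $\alpha\in\xi$). $n$-ball subshift: for a convex subshift $\Omega$, let $A^{[n:\Omega]}$ be the finite set of formal symbols $[(a.\xi)^n\xleftarrow{a}\xi^n]$ with $\xi\in\Omega$, $a\in A$, $a\in\xi$ (a symbol $[B\xleftarrow{a}B']$ is determined by the triple $(B,a,B')$), and set $[B'\xleftarrow{a^{-1}}B]:=[B\xleftarrow{a}B']^{-1}$ in the free group $\mathbb F^{[n:\Omega]}=\mathbb F(A^{[n:\Omega]})$. For $\xi\in\Omega$ and $\alpha=s_m\cdots s_1\in\xi$ reduced ($s_i\in A\cup A^{-1}$), put $B_k=((s_k\cdots s_1).\xi)^n$ and $\phi_n(\xi,\alpha)=[B_m\xleftarrow{s_m}B_{m-1}]\cdots[B_1\xleftarrow{s_1}B_0]$, $\phi_n(\xi,1)=1$, $\phi_n(\xi)=\{\phi_n(\xi,\alpha):\alpha\in\xi\}\in\mathcal C(A^{[n:\Omega]})$. The $n$-ball subshift $\theta^{[n]}$ is the restriction of the full convex shift on $A^{[n:\Omega]}$ to $\Omega^{[n]}:=\phi_n(\Omega)$ (a convex subshift). For $\Omega=\mathcal C$ write $A^{[n]}$, $\mathbb F^{[n]}$, $\mathcal C^{[n]}$. *)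

theory Defs
  imports Main
begin

text \<open>A generator occurrence is a pair
(a, e) with e = True for a and e = False for a^-1.  A group element is a reduced word,
stored as a list in WRITTEN order: the word a_m^{e_m} ... a_1^{e_1} is the list
[(a_m,e_m), ..., (a_1,e_1)].\<close>

type_synonym 'a gen = "'a \<times> bool"

definition ginv :: "'a gen \<Rightarrow> 'a gen" where
  "ginv s = (fst s, \<not> snd s)"

definition reduced :: "'a gen list \<Rightarrow> bool" where
  "reduced w \<longleftrightarrow> (\<forall>i. Suc i < length w \<longrightarrow> w ! Suc i \<noteq> ginv (w ! i))"

definition words :: "'a set \<Rightarrow> 'a gen list set" where
  "words A = {w. reduced w \<and> fst ` set w \<subseteq> A}"

fun reduce :: "'a gen list \<Rightarrow> 'a gen list" where
  "reduce [] = []"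
| "reduce (s # w) = (case reduce w of [] \<Rightarrow> [s]
      | t # r \<Rightarrow> (if t = ginv s then r else s # t # r))"

definition gmult :: "'a gen list \<Rightarrow> 'a gen list \<Rightarrow> 'a gen list" where
  "gmult x y = reduce (x @ y)"

definition ginverse :: "'a gen list \<Rightarrow> 'a gen list" where
  "ginverse w = rev (map ginv w)"

text \<open>Right-convex subsets: with written order, a_k^{e_k}...a_1^{e_1} is a drop of the list.\<close>
definition Cset :: "'a set \<Rightarrow> 'a gen list set set" where
  "Cset A = {\<xi>. \<xi> \<subseteq> words A \<and> [] \<in> \<xi> \<and> (\<forall>w\<in>\<xi>. \<forall>k. drop k w \<in> \<xi>)}"

text \<open>Partial action: alpha.xi = xi alpha^-1 (used for alpha \<in> xi).\<close>
definition act :: "'a gen list \<Rightarrow> 'a gen list set \<Rightarrow> 'a gen list set" where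
  "act \<alpha> \<xi> = (\<lambda>\<beta>. gmult \<beta> (ginverse \<alpha>)) ` \<xi>"

definition nball :: "nat \<Rightarrow> 'a gen list set \<Rightarrow> 'a gen list set" where
  "nball n \<xi> = {\<alpha>\<in>\<xi>. length \<alpha> \<le> n}"

definition avoiding :: "'a set \<Rightarrow> nat \<Rightarrow> 'a gen list set set \<Rightarrow> 'a gen list set set" where
  "avoiding A n F = {\<xi> \<in> Cset A. \<forall>B\<in>F. \<forall>\<alpha>\<in>\<xi>. nball n (act \<alpha> \<xi>) \<noteq> B}"

definition is_step :: "'a set \<Rightarrow> nat \<Rightarrow> 'a gen list set set \<Rightarrow> bool" where
  "is_step A R \<Omega> \<longleftrightarrow> (\<exists>F. finite F \<and> (\<forall>B\<in>F. B \<in> Cset A \<and> (\<forall>\<alpha>\<in>B. length \<alpha> \<le> R))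
      \<and> \<Omega> = avoiding A R F)"

text \<open>n-ball alphabet: symbol [B <-a- B'] is the triple (B, a, B').\<close>
type_synonym 'a sym = "'a gen list set \<times> 'a \<times> 'a gen list set"

definition ball_alph :: "nat \<Rightarrow> 'a set \<Rightarrow> 'a gen list set set \<Rightarrow> 'a sym set" where
  "ball_alph n A \<Omega> = {(nball n (act [(a, True)] \<xi>), a, nball n \<xi>) | \<xi> a.
      \<xi> \<in> \<Omega> \<and> a \<in> A \<and> [(a, True)] \<in> \<xi>}"

text \<open>[B_new <-s- B_old] as a generator of F(A^[n]); for s = a^-1 it is
[B_old <-a- B_new]^-1.\<close>
definition bsym :: "'a gen list set \<Rightarrow> 'a gen \<Rightarrow> 'a gen list set \<Rightarrow> 'a sym gen" where
  "bsym Bnew s Bold = (if snd s then ((Bnew, fst s, Bold), True) else ((Bold, fst s, Bnew), False))"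

fun phi :: "nat \<Rightarrow> 'a gen list set \<Rightarrow> 'a gen list \<Rightarrow> 'a sym gen list" where
  "phi n \<xi> [] = []"
| "phi n \<xi> (s # w) = bsym (nball n (act (s # w) \<xi>)) s (nball n (act w \<xi>)) # phi n \<xi> w"

definition phiset :: "nat \<Rightarrow> 'a gen list set \<Rightarrow> 'a sym gen list set" where
  "phiset n \<xi> = phi n \<xi> ` \<xi>"

end

theory Submission
  imports Defs
begin

text \<open>Erasing the ball labels of \<open>\<phi>\<^sub>n(\<xi>, \<alpha>)\<close> gives back \<open>\<alpha>\<close>, so \<open>\<phi>\<^sub>n\<close> is injective. The
1-ball of \<open>\<phi>\<^sub>n(\<zeta>)\<close> at a point records, for every edge \<open>s\<close> leaving it, the \<open>n\<close>-balls of \<open>\<zeta>\<close>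
and of \<open>s.\<zeta>\<close>. So if every 1-ball of a convex \<open>\<eta>\<close> over the ball alphabet looks like a 1-ball of
some \<open>\<phi>\<^sub>n(\<zeta>)\<close>, the labels along any path are consistent: the target ball of one edge is the
source ball of the next. Induction on \<open>k \<le> n\<close> then shows that the \<open>k\<close>-ball of the erased
configuration \<open>\<xi>\<close> seen from any point agrees with the label \<open>\<eta>\<close> carries there, whence \<open>\<eta> = \<phi>\<^sub>n(\<xi>)\<close>. Membership in the image of \<open>\<phi>\<^sub>n\<close> is
therefore decided by the finitely many possible 1-balls.\<close>

subsection \<open>Free groups\<close>

lemma ginv_ginv [simp]: "ginv (ginv s) = s"
  by (cases s) (simp add: ginv_def)

lemma fst_ginv [simp]: "fst (ginv s) = fst s"
  by (simp add: ginv_def)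

lemma reduced_Nil [simp]: "reduced []"
  by (simp add: reduced_def)

lemma reduced_single [simp]: "reduced [s]"
  by (simp add: reduced_def)

lemma reduced_Cons2: "reduced (s # t # r) \<longleftrightarrow> t \<noteq> ginv s \<and> reduced (t # r)"
  unfolding reduced_def
proof safe
  fix i assume "\<forall>i. Suc i < length (t # r) \<longrightarrow> (t # r) ! Suc i \<noteq> ginv ((t # r) ! i)"
    "t \<noteq> ginv s" "Suc i < length (s # t # r)" "(s # t # r) ! Suc i = ginv ((s # t # r) ! i)"
  then show False by (cases i) auto
qed (metis Suc_less_eq length_Cons nth_Cons_Suc zero_less_Suc nth_Cons_0)+

lemma reduced_Cons: "reduced (s # w) \<longleftrightarrow> reduced w \<and> (w = [] \<or> hd w \<noteq> ginv s)"
  by (cases w) (auto simp: reduced_Cons2)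

lemma reduced_drop: "reduced w \<Longrightarrow> reduced (drop k w)"
  by (auto simp: reduced_def)

lemma reduced_appendD: "reduced (x @ y) \<Longrightarrow> reduced x"
  unfolding reduced_def by (metis Suc_lessD length_append nth_append trans_less_add1)

lemma reduce_Cons:
  "reduce (s # w) = (if reduce w \<noteq> [] \<and> hd (reduce w) = ginv s then tl (reduce w) else s # reduce w)"
  by (cases "reduce w") auto

declare reduce.simps(2) [simp del]

lemma reduced_reduce [simp]: "reduced (reduce w)"
proof (induction w)
  case (Cons s w)
  then show ?case
    by (cases "reduce w") (auto simp: reduced_Cons reduce_Cons)
qed simp

lemma reduce_reduced: "reduced w \<Longrightarrow> reduce w = w"
  by (induction w) (auto simp: reduced_Cons reduce_Cons)

lemma reduce_idem [simp]: "reduce (reduce w) = reduce w"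
  by (simp add: reduce_reduced)

lemma set_reduce: "set (reduce w) \<subseteq> set w"
proof (induction w)
  case (Cons s w)
  then show ?case
    by (cases "reduce w") (auto simp: reduce_Cons)
qed simp

lemma reduce_append_reduce: "reduce (x @ y) = reduce (x @ reduce y)"
  by (induction x) (auto simp: reduce_Cons)

lemma reduce_Cons_reduce [simp]: "reduce (s # reduce w) = reduce (s # w)"
  using reduce_append_reduce[of "[s]" w] by simp

lemma reduce_cancel: "reduce (s # ginv s # w) = reduce w"
proof (cases "reduce w")
  case (Cons t r)
  have "reduced (t # r)" using Cons by (metis reduced_reduce)
  with Cons show ?thesis
    by (cases "t = s") (auto simp: reduce_Cons reduced_Cons)
qed (simp add: reduce_Cons)

lemma reduce_reduce_append: "reduce (reduce x @ y) = reduce (x @ y)"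
proof (induction x)
  case (Cons s x)
  have IH: "reduce (s # x @ y) = reduce (s # reduce x @ y)"
    using Cons.IH by (metis reduce_Cons_reduce)
  show ?case
  proof (cases "reduce x \<noteq> [] \<and> hd (reduce x) = ginv s")
    case True
    then obtain r where rx: "reduce x = ginv s # r" by (cases "reduce x") auto
    then have "reduce (s # x) = r" by (simp add: reduce_Cons)
    then show ?thesis using IH rx by (simp add: reduce_cancel)
  next
    case False
    then have "reduce (s # x) = s # reduce x" by (auto simp: reduce_Cons)
    then show ?thesis using IH by simp
  qed
qed simp

lemma gmult_assoc: "gmult (gmult x y) z = gmult x (gmult y z)"
  unfolding gmult_def by (metis append_assoc reduce_append_reduce reduce_reduce_append)

lemma ginverse_Nil [simp]: "ginverse [] = []"
  by (simp add: ginverse_def)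

lemma ginverse_Cons: "ginverse (s # x) = ginverse x @ [ginv s]"
  by (simp add: ginverse_def)

lemma ginverse_append: "ginverse (x @ y) = ginverse y @ ginverse x"
  by (simp add: ginverse_def)

lemma ginverse_ginverse [simp]: "ginverse (ginverse x) = x"
  by (simp add: ginverse_def rev_map comp_def)

lemma reduce_append_ginverse_cancel: "reduce (x @ ginverse x @ y) = reduce y"
proof (induction x arbitrary: y)
  case (Cons s x)
  have "reduce ((s # x) @ ginverse (s # x) @ y) = reduce (s # reduce (x @ ginverse x @ ginv s # y))"
    by (simp add: ginverse_Cons)
  also have "\<dots> = reduce (s # ginv s # y)" using Cons by simp
  finally show ?case by (simp add: reduce_cancel)
qed simp

lemma reduce_append_ginverse_cancel_mid: "reduce (p @ x @ ginverse x @ y) = reduce (p @ y)"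
  by (metis reduce_append_reduce reduce_append_ginverse_cancel)

lemma reduce_ginverse_append_cancel: "reduce (ginverse x @ x @ y) = reduce y"
  using reduce_append_ginverse_cancel[of "ginverse x"] by simp

lemma gmult_ginverse [simp]: "gmult x (ginverse x) = []"
  using reduce_append_ginverse_cancel[of x "[]"] by (simp add: gmult_def)

lemma gmult_ginverse_left [simp]: "gmult (ginverse x) x = []"
  using reduce_ginverse_append_cancel[of x "[]"] by (simp add: gmult_def)

lemma gmult_Nil_right: "reduced x \<Longrightarrow> gmult x [] = x"
  by (simp add: gmult_def reduce_reduced)

lemma gmult_Nil_left: "reduced x \<Longrightarrow> gmult [] x = x"
  by (simp add: gmult_def reduce_reduced)

lemma reduced_gmult [simp]: "reduced (gmult x y)"
  by (simp add: gmult_def)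

lemma reduced_ginverse: "reduced x \<Longrightarrow> reduced (ginverse x)"
  unfolding reduced_def ginverse_def
proof (intro allI impI)
  fix i assume r: "\<forall>i. Suc i < length x \<longrightarrow> x ! Suc i \<noteq> ginv (x ! i)"
    and i: "Suc i < length (rev (map ginv x))"
  define j where "j = length x - Suc (Suc i)"
  have j: "Suc j < length x" "length x - Suc i = Suc j" using i by (auto simp: j_def)
  have "rev (map ginv x) ! Suc i = ginv (x ! j)" using i by (simp add: rev_nth j_def)
  moreover have "rev (map ginv x) ! i = ginv (x ! Suc j)" using i j by (simp add: rev_nth)
  ultimately show "rev (map ginv x) ! Suc i \<noteq> ginv (rev (map ginv x) ! i)"
    using r j by (metis ginv_ginv)
qed

lemma ginverse_reduce: "ginverse (reduce w) = reduce (ginverse w)"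
proof -
  let ?u = "reduce w" and ?v = "reduce (ginverse w)"
  have uv: "gmult ?u ?v = []"
    unfolding gmult_def
    by (metis append_Nil2 reduce.simps(1) reduce_append_reduce reduce_append_ginverse_cancel
        reduce_reduce_append)
  have "?v = gmult (gmult (ginverse ?u) ?u) ?v" by (simp add: gmult_Nil_left)
  also have "\<dots> = gmult (ginverse ?u) (gmult ?u ?v)" by (rule gmult_assoc)
  also have "\<dots> = ginverse ?u" using uv by (simp add: gmult_Nil_right reduced_ginverse)
  finally show ?thesis by simp
qed

lemma ginverse_gmult: "ginverse (gmult x y) = gmult (ginverse y) (ginverse x)"
  by (simp add: gmult_def ginverse_reduce ginverse_append)

lemma gmult_single:
  "reduced b \<Longrightarrow> gmult [t] b = (if b \<noteq> [] \<and> hd b = ginv t then tl b else t # b)"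
  by (simp add: gmult_def reduce_Cons reduce_reduced)

lemma gmult_single_Cons: "reduced (t # b) \<Longrightarrow> gmult [t] b = t # b"
  by (auto simp: gmult_single reduced_Cons)

lemma gmult_ginv_single [simp]: "gmult [ginv t] [t] = []"
  by (simp add: gmult_def reduce_Cons)

lemma gmult_cancel_decomp:
  assumes "reduced x" "reduced y"
  shows "\<exists>x1 d y2. x = x1 @ d \<and> y = ginverse d @ y2 \<and> gmult x y = x1 @ y2"
  using assms(1)
proof (induction x)
  case Nil
  then show ?case
    using assms(2) by (intro exI[of _ "[]"] exI[of _ y]) (auto simp: gmult_Nil_left)
next
  case (Cons s x)
  then have "reduced x" by (simp add: reduced_Cons)
  from Cons.IH[OF this] obtain x1 d y2
    where h: "x = x1 @ d" "y = ginverse d @ y2" "gmult x y = x1 @ y2"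
    by blast
  have g: "gmult (s # x) y =
      (if x1 @ y2 \<noteq> [] \<and> hd (x1 @ y2) = ginv s then tl (x1 @ y2) else s # x1 @ y2)"
    using h(3) by (simp add: gmult_def reduce_Cons)
  show ?case
  proof (cases x1)
    case Nil
    show ?thesis
    proof (cases "y2 \<noteq> [] \<and> hd y2 = ginv s")
      case True
      then obtain y3 where "y2 = ginv s # y3" by (cases y2) auto
      then show ?thesis using g h Nil
        by (intro exI[of _ "[]"] exI[of _ "s # d"] exI[of _ y3]) (auto simp: ginverse_Cons)
    next
      case False
      then show ?thesis using g h Nil
        by (intro exI[of _ "[s]"] exI[of _ d] exI[of _ y2]) auto
    qed
  next
    case (Cons c x1')
    with Cons.prems h have "hd (x1 @ y2) \<noteq> ginv s" by (auto simp: reduced_Cons)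
    then show ?thesis using g h
      by (intro exI[of _ "s # x1"] exI[of _ d] exI[of _ y2]) auto
  qed
qed

subsection \<open>Convex sets and the partial action\<close>

lemma Cset_words: "\<zeta> \<in> Cset X \<Longrightarrow> \<zeta> \<subseteq> words X"
  by (simp add: Cset_def)

lemma Cset_Nil: "\<zeta> \<in> Cset X \<Longrightarrow> [] \<in> \<zeta>"
  by (simp add: Cset_def)

lemma Cset_drop: "\<zeta> \<in> Cset X \<Longrightarrow> w \<in> \<zeta> \<Longrightarrow> drop k w \<in> \<zeta>"
  by (simp add: Cset_def)

lemma Cset_Cons: "\<zeta> \<in> Cset X \<Longrightarrow> s # w \<in> \<zeta> \<Longrightarrow> w \<in> \<zeta>"
  using Cset_drop[of \<zeta> X "s # w" 1] by simp

lemma Cset_reduced: "\<zeta> \<in> Cset X \<Longrightarrow> w \<in> \<zeta> \<Longrightarrow> reduced w"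
  by (auto simp: Cset_def words_def)

lemma CsetI:
  assumes "\<zeta> \<subseteq> words X" "[] \<in> \<zeta>" "\<And>w k. w \<in> \<zeta> \<Longrightarrow> drop k w \<in> \<zeta>"
  shows "\<zeta> \<in> Cset X"
  using assms by (auto simp: Cset_def)

lemma act_mem:
  assumes "\<And>b. b \<in> \<zeta> \<Longrightarrow> reduced b" and "reduced g"
  shows "g \<in> act a \<zeta> \<longleftrightarrow> gmult g a \<in> \<zeta>"
proof
  assume "g \<in> act a \<zeta>"
  then obtain b where b: "b \<in> \<zeta>" "g = gmult b (ginverse a)" by (auto simp: act_def)
  then have "gmult g a = b" using assms(1) by (simp add: gmult_assoc gmult_Nil_right)
  with b show "gmult g a \<in> \<zeta>" by simp
next
  assume "gmult g a \<in> \<zeta>"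
  moreover have "gmult (gmult g a) (ginverse a) = g"
    using assms(2) by (simp add: gmult_assoc gmult_Nil_right)
  ultimately show "g \<in> act a \<zeta>" unfolding act_def by (metis image_eqI)
qed

lemma singleton_act_iff: "\<zeta> \<in> Cset X \<Longrightarrow> [t] \<in> act \<beta> \<zeta> \<longleftrightarrow> gmult [t] \<beta> \<in> \<zeta>"
  by (simp add: act_mem Cset_reduced)

lemma act_act: "act g (act a \<zeta>) = act (gmult g a) \<zeta>"
  unfolding act_def image_image ginverse_gmult by (simp add: gmult_assoc)

lemma act_Nil: "\<zeta> \<in> Cset X \<Longrightarrow> act [] \<zeta> = \<zeta>"
  unfolding act_def by (simp add: gmult_Nil_right Cset_reduced)

lemma act_words:
  assumes "\<zeta> \<subseteq> words X" "fst ` set a \<subseteq> X"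
  shows "act a \<zeta> \<subseteq> words X"
proof
  fix g assume "g \<in> act a \<zeta>"
  then obtain b where b: "b \<in> \<zeta>" "g = gmult b (ginverse a)" by (auto simp: act_def)
  have "fst ` set g \<subseteq> fst ` set (b @ ginverse a)"
    using b(2) set_reduce[of "b @ ginverse a"] by (auto simp: gmult_def)
  also have "\<dots> \<subseteq> X" using assms b(1) by (auto simp: words_def ginverse_def)
  finally show "g \<in> words X" using b by (simp add: words_def)
qed

text \<open>Convexity of \<open>\<zeta>\<alpha>\<^sup>-\<^sup>1\<close>: a suffix of \<open>\<beta>\<alpha>\<^sup>-\<^sup>1\<close> either comes from a suffix of \<open>\<beta>\<close>, or it is
\<open>\<gamma>\<alpha>\<^sup>-\<^sup>1\<close> for a suffix \<open>\<gamma>\<close> of \<open>\<alpha>\<close>.\<close>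

lemma act_Cset:
  assumes z: "\<zeta> \<in> Cset X" and a: "a \<in> \<zeta>"
  shows "act a \<zeta> \<in> Cset X"
proof (rule CsetI)
  show "act a \<zeta> \<subseteq> words X"
    using act_words[OF Cset_words[OF z]] Cset_words[OF z] a by (auto simp: words_def)
  show "[] \<in> act a \<zeta>" using a unfolding act_def by (metis gmult_ginverse image_eqI)
  fix g k assume "g \<in> act a \<zeta>"
  then obtain b where b: "b \<in> \<zeta>" "g = gmult b (ginverse a)" by (auto simp: act_def)
  obtain x1 d y2 where h: "b = x1 @ d" "ginverse a = ginverse d @ y2" "g = x1 @ y2"
    using gmult_cancel_decomp[OF Cset_reduced[OF z b(1)] reduced_ginverse[OF Cset_reduced[OF z a]]]
      b(2) by blast
  have rg: "reduced (drop k g)" using b by (simp add: reduced_drop)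
  show "drop k g \<in> act a \<zeta>"
  proof (cases "k \<le> length x1")
    case True
    have "gmult (drop k b) (ginverse a) = reduce (drop k x1 @ d @ ginverse d @ y2)"
      using True h by (simp add: gmult_def)
    also have "\<dots> = reduce (drop k x1 @ y2)" by (rule reduce_append_ginverse_cancel_mid)
    also have "\<dots> = drop k g" using True h rg by (simp add: reduce_reduced)
    finally show ?thesis using Cset_drop[OF z b(1)] unfolding act_def by (metis image_eqI)
  next
    case False
    define m where "m = k - length x1"
    have dg: "drop k g = drop m y2" using False h by (simp add: m_def)
    have "a = ginverse y2 @ d" using arg_cong[OF h(2), of ginverse] by (simp add: ginverse_append)
    also have "ginverse y2 = ginverse (drop m y2) @ ginverse (take m y2)"
      by (metis append_take_drop_id ginverse_append)
    finally have "a = ginverse (drop m y2) @ ginverse (take m y2) @ d" by simp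
    then have mem: "ginverse (take m y2) @ d \<in> \<zeta>"
      using Cset_drop[OF z a, of "length (ginverse (drop m y2))"] by simp
    have "gmult (ginverse (take m y2) @ d) (ginverse a)
        = reduce (ginverse (take m y2) @ d @ ginverse d @ take m y2 @ drop m y2)"
      using h by (simp add: gmult_def)
    also have "\<dots> = reduce (ginverse (take m y2) @ take m y2 @ drop m y2)"
      by (rule reduce_append_ginverse_cancel_mid)
    also have "\<dots> = drop k g"
      using reduce_ginverse_append_cancel[of "take m y2" "drop m y2"] dg rg by (simp add: reduce_reduced)
    finally show ?thesis using mem unfolding act_def by (metis image_eqI)
  qed
qed

lemma snoc_mem_iff:
  assumes z: "\<zeta> \<in> Cset X" and r: "reduced (g @ [s])"
  shows "g @ [s] \<in> \<zeta> \<longleftrightarrow> [s] \<in> \<zeta> \<and> g \<in> act [s] \<zeta>"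
proof -
  have "gmult g [s] = g @ [s]" using r by (simp add: gmult_def reduce_reduced)
  then have "g \<in> act [s] \<zeta> \<longleftrightarrow> g @ [s] \<in> \<zeta>"
    using act_mem[of \<zeta> g "[s]"] Cset_reduced[OF z] reduced_appendD[OF r] by simp
  moreover have "g @ [s] \<in> \<zeta> \<Longrightarrow> [s] \<in> \<zeta>" using Cset_drop[OF z, of "g @ [s]" "length g"] by simp
  ultimately show ?thesis by blast
qed

lemma nball_nball: "k \<le> n \<Longrightarrow> nball k (nball n X) = nball k X"
  by (auto simp: nball_def)

lemma singleton_mem_nball_1: "[t] \<in> nball 1 X \<longleftrightarrow> [t] \<in> X"
  by (simp add: nball_def)

lemma nball_Cset: "\<zeta> \<in> Cset X \<Longrightarrow> nball k \<zeta> \<in> Cset X"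
  unfolding nball_def by (rule CsetI) (use Cset_words Cset_Nil Cset_drop in auto)

lemma nball_1_eqI:
  assumes "[] \<in> X" "[] \<in> Y" "\<And>t. [t] \<in> X \<longleftrightarrow> [t] \<in> Y"
  shows "nball 1 X = nball 1 Y"
proof -
  have "x = [] \<or> (\<exists>t. x = [t])" if "length x \<le> 1" for x :: "'b list"
    using that by (cases x) auto
  then show ?thesis using assms unfolding nball_def by blast
qed

lemma nball_Suc_eqI:
  assumes Z: "Z \<in> Cset X" and \<zeta>: "\<zeta> \<in> Cset X"
    and edges: "\<And>s. [s] \<in> Z \<longleftrightarrow> [s] \<in> \<zeta>"
    and shifted: "\<And>s. [s] \<in> \<zeta> \<Longrightarrow> nball k (act [s] Z) = nball k (act [s] \<zeta>)"
  shows "nball (Suc k) Z = nball (Suc k) \<zeta>"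
proof -
  have "w \<in> Z \<longleftrightarrow> w \<in> \<zeta>" if w: "length w \<le> Suc k" for w
  proof (cases w rule: rev_exhaust)
    case Nil
    then show ?thesis using Cset_Nil[OF Z] Cset_Nil[OF \<zeta>] by simp
  next
    case (snoc g s)
    show ?thesis
    proof (cases "reduced w")
      case False
      then show ?thesis using Cset_reduced[OF Z] Cset_reduced[OF \<zeta>] by blast
    next
      case True
      have "g \<in> act [s] Z \<longleftrightarrow> g \<in> act [s] \<zeta>" if "[s] \<in> \<zeta>"
        using shifted[OF that] w snoc unfolding nball_def set_eq_iff by auto
      then show ?thesis
        using snoc_mem_iff[OF Z] snoc_mem_iff[OF \<zeta>] True snoc edges by blast
    qed
  qed
  then show ?thesis by (auto simp: nball_def)
qed

subsection \<open>Steps and local conditions\<close>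

definition locally_in :: "nat \<Rightarrow> 'b gen list set set \<Rightarrow> 'b gen list set \<Rightarrow> bool" where
  "locally_in R \<Omega> \<eta> \<longleftrightarrow> (\<forall>\<alpha>\<in>\<eta>. nball R (act \<alpha> \<eta>) \<in> nball R ` \<Omega>)"

lemma finite_short_lists:
  assumes "finite X"
  shows "finite {w :: ('b \<times> bool) list. fst ` set w \<subseteq> X \<and> length w \<le> k}"
proof (rule finite_subset)
  show "finite {w. set w \<subseteq> X \<times> (UNIV :: bool set) \<and> length w \<le> k}"
    by (rule finite_lists_length_le) (simp add: assms)
qed auto

lemma finite_balls:
  fixes X :: "'b set"
  assumes "finite X"
  shows "finite {B. B \<subseteq> words X \<and> (\<forall>\<alpha>\<in>B. length \<alpha> \<le> R)}"
proof (rule finite_subset)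
  show "finite (Pow {w :: 'b gen list. fst ` set w \<subseteq> X \<and> length w \<le> R})"
    using finite_short_lists[OF assms] by simp
qed (auto simp: words_def)

text \<open>The forbidden balls are the \<open>R\<close>-balls that do not occur in \<open>\<Omega>\<close>.\<close>

lemma is_stepI:
  assumes "finite X" and \<Omega>: "\<Omega> \<subseteq> Cset X"
    and local: "\<And>\<eta>. \<eta> \<in> \<Omega> \<Longrightarrow> locally_in R \<Omega> \<eta>"
    and complete: "\<And>\<eta>. \<eta> \<in> Cset X \<Longrightarrow> locally_in R \<Omega> \<eta> \<Longrightarrow> \<eta> \<in> \<Omega>"
  shows "is_step X R \<Omega>"
proof -
  define F where "F = {B \<in> Cset X. (\<forall>\<alpha>\<in>B. length \<alpha> \<le> R) \<and> B \<notin> nball R ` \<Omega>}"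
  have "finite F"
    by (rule finite_subset[OF _ finite_balls[OF \<open>finite X\<close>, of R]]) (auto simp: F_def Cset_def)
  have not_forbidden: "(\<forall>B\<in>F. \<forall>\<alpha>\<in>\<eta>. nball R (act \<alpha> \<eta>) \<noteq> B) \<longleftrightarrow> locally_in R \<Omega> \<eta>"
    if "\<eta> \<in> Cset X" for \<eta>
  proof -
    have "nball R (act \<alpha> \<eta>) \<in> Cset X \<and> (\<forall>\<beta>\<in>nball R (act \<alpha> \<eta>). length \<beta> \<le> R)"
      if "\<alpha> \<in> \<eta>" for \<alpha>
      using nball_Cset[OF act_Cset[OF \<open>\<eta> \<in> Cset X\<close> that]] by (simp add: nball_def)
    then show ?thesis unfolding F_def locally_in_def by blast
  qed
  have "\<Omega> = avoiding X R F"
    unfolding avoiding_def using \<Omega> local complete not_forbidden by blast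
  with \<open>finite F\<close> show ?thesis unfolding is_step_def F_def by blast
qed

subsection \<open>The labelling map\<close>

definition proj :: "'a sym gen \<Rightarrow> 'a gen" where
  "proj t = (fst (snd (fst t)), snd t)"

abbreviation Alph :: "nat \<Rightarrow> 'a set \<Rightarrow> 'a sym set" where
  "Alph n A \<equiv> ball_alph n A (Cset A)"

abbreviation edge_sym :: "nat \<Rightarrow> 'a gen list set \<Rightarrow> 'a gen \<Rightarrow> 'a sym gen" where
  "edge_sym n \<zeta> s \<equiv> bsym (nball n (act [s] \<zeta>)) s (nball n \<zeta>)"

lemma proj_bsym [simp]: "proj (bsym X s Y) = s"
  by (cases s) (auto simp: proj_def bsym_def)

lemma ginv_bsym: "ginv (bsym X s Y) = bsym Y (ginv s) X"
  by (cases s) (auto simp: bsym_def ginv_def)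

lemma bsym_inj: "bsym X s Y = bsym X' s' Y' \<longleftrightarrow> X = X' \<and> s = s' \<and> Y = Y'"
  by (cases s; cases s') (auto simp: bsym_def split: if_splits)

lemma proj_ginv: "proj (ginv t) = ginv (proj t)"
  by (simp add: proj_def ginv_def)

lemma map_proj_phi [simp]: "map proj (phi n \<zeta> w) = w"
  by (induction w) auto

lemma drop_phi: "drop k (phi n \<zeta> w) = phi n \<zeta> (drop k w)"
  by (induction w arbitrary: k) (auto simp: drop_Cons split: nat.split)

lemma phi_eq_Nil_iff [simp]: "phi n \<zeta> w = [] \<longleftrightarrow> w = []"
  by (cases w) auto

lemma hd_phi_not_ginv:
  "w = [] \<or> hd w \<noteq> ginv s \<Longrightarrow> w = [] \<or> hd (phi n \<zeta> w) \<noteq> ginv (bsym X s Y)"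
  by (cases w) (auto simp: ginv_bsym bsym_inj)

lemma reduced_phi: "reduced w \<Longrightarrow> reduced (phi n \<zeta> w)"
proof (induction w)
  case (Cons s w)
  have "w = [] \<or> hd (phi n \<zeta> w) \<noteq> ginv (bsym (nball n (act (s # w) \<zeta>)) s (nball n (act w \<zeta>)))"
    using Cons.prems by (intro hd_phi_not_ginv) (simp add: reduced_Cons)
  with Cons show ?case by (simp add: reduced_Cons)
qed simp

lemma finite_ball_alph:
  assumes "finite A" and "\<Omega> \<subseteq> Cset A"
  shows "finite (ball_alph n A \<Omega>)"
proof (rule finite_subset)
  let ?balls = "{B. B \<subseteq> words A \<and> (\<forall>\<alpha>\<in>B. length \<alpha> \<le> n)}"
  show "finite (?balls \<times> A \<times> ?balls)" using finite_balls[OF \<open>finite A\<close>] \<open>finite A\<close> by simp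
  show "ball_alph n A \<Omega> \<subseteq> ?balls \<times> A \<times> ?balls"
  proof
    fix x assume "x \<in> ball_alph n A \<Omega>"
    then obtain \<xi> a where x: "x = (nball n (act [(a, True)] \<xi>), a, nball n \<xi>)" "\<xi> \<in> Cset A" "a \<in> A"
      using assms(2) unfolding ball_alph_def by blast
    have "act [(a, True)] \<xi> \<subseteq> words A" using act_words[OF Cset_words[OF x(2)]] x(3) by simp
    then show "x \<in> ?balls \<times> A \<times> ?balls" using x Cset_words[OF x(2)] by (auto simp: nball_def)
  qed
qed

lemma edge_sym_in_Alph:
  assumes Z: "Z \<in> Cset A" and s: "[s] \<in> Z"
  shows "fst (edge_sym n Z s) \<in> Alph n A"
proof (cases "snd s")
  case True
  then have "s = (fst s, True)" by (cases s) auto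
  moreover have "fst s \<in> A" using Cset_words[OF Z] s by (auto simp: words_def)
  ultimately show ?thesis
    unfolding ball_alph_def bsym_def using True Z s
    by (intro CollectI exI[of _ Z] exI[of _ "fst s"]) auto
next
  case False
  \<comment> \<open>the symbol is then the inverse of the positive edge from \<open>s.Z\<close> back to \<open>Z\<close>\<close>
  have gs: "ginv s = (fst s, True)" using False by (cases s) (simp add: ginv_def)
  have Z2: "act [s] Z \<in> Cset A" using act_Cset[OF Z s] .
  have "[ginv s] \<in> act [s] Z"
    using singleton_act_iff[OF Z, of "ginv s" "[s]"] Cset_Nil[OF Z] by simp
  moreover have "act [ginv s] (act [s] Z) = Z"
    by (simp add: act_act act_Nil[OF Z])
  moreover have "fst s \<in> A" using Cset_words[OF Z] s by (auto simp: words_def)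
  ultimately show ?thesis
    unfolding ball_alph_def bsym_def using False Z2 gs
    by (intro CollectI exI[of _ "act [s] Z"] exI[of _ "fst s"]) auto
qed

lemma act_Cons: "reduced (s # w) \<Longrightarrow> act (s # w) \<zeta> = act [s] (act w \<zeta>)"
  by (simp add: act_act gmult_single_Cons)

lemma phi_in_Alph:
  assumes z: "\<zeta> \<in> Cset A"
  shows "w \<in> \<zeta> \<Longrightarrow> fst ` set (phi n \<zeta> w) \<subseteq> Alph n A"
proof (induction w)
  case (Cons s w)
  have w: "w \<in> \<zeta>" using Cset_Cons[OF z Cons.prems] .
  have r: "reduced (s # w)" using Cset_reduced[OF z Cons.prems] .
  then have "[s] \<in> act w \<zeta>"
    using singleton_act_iff[OF z] Cons.prems by (simp add: gmult_single_Cons)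
  from edge_sym_in_Alph[OF act_Cset[OF z w] this, of n] show ?case
    using Cons.IH[OF w] act_Cons[OF r] by simp
qed simp

lemma phiset_Cset:
  assumes z: "\<zeta> \<in> Cset A"
  shows "phiset n \<zeta> \<in> Cset (Alph n A)"
proof (rule CsetI)
  show "phiset n \<zeta> \<subseteq> words (Alph n A)"
    using phi_in_Alph[OF z] reduced_phi[OF Cset_reduced[OF z]] by (auto simp: phiset_def words_def)
  show "[] \<in> phiset n \<zeta>" using Cset_Nil[OF z] unfolding phiset_def by (metis phi.simps(1) image_eqI)
  show "drop k w \<in> phiset n \<zeta>" if "w \<in> phiset n \<zeta>" for w k
    using that Cset_drop[OF z] by (auto simp: phiset_def drop_phi)
qed

lemma singleton_mem_phiset:
  assumes z: "\<zeta> \<in> Cset A"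
  shows "[t] \<in> phiset n \<zeta> \<longleftrightarrow> (\<exists>s. [s] \<in> \<zeta> \<and> t = edge_sym n \<zeta> s)"
proof -
  have "phi n \<zeta> v = [t] \<longleftrightarrow> (\<exists>s. v = [s] \<and> t = edge_sym n \<zeta> s)" for v
    using act_Nil[OF z] by (cases v) auto
  then show ?thesis unfolding phiset_def image_iff by (metis (no_types, lifting))
qed

lemma gmult_edge_sym_phi:
  assumes z: "\<zeta> \<in> Cset A" and w: "w \<in> \<zeta>"
  shows "gmult [edge_sym n (act w \<zeta>) s] (phi n \<zeta> w) = phi n \<zeta> (gmult [s] w)"
proof -
  have rw: "reduced w" using Cset_reduced[OF z w] .
  have rp: "reduced (phi n \<zeta> w)" using reduced_phi[OF rw] .
  show ?thesis
  proof (cases "w \<noteq> [] \<and> hd w = ginv s")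
    case True
    then obtain w' where w': "w = ginv s # w'" by (cases w) auto
    with rw rp show ?thesis
      by (simp add: act_act gmult_single ginv_bsym)
  next
    case False
    then have g: "gmult [s] w = s # w" using rw by (auto simp: gmult_single)
    have "w = [] \<or> hd (phi n \<zeta> w) \<noteq> ginv (edge_sym n (act w \<zeta>) s)"
      using False hd_phi_not_ginv by blast
    with rp g show ?thesis by (auto simp: act_act gmult_single)
  qed
qed

lemma gmult_phi_mem_iff:
  assumes z: "\<zeta> \<in> Cset A" and w: "w \<in> \<zeta>"
  shows "gmult [t] (phi n \<zeta> w) \<in> phiset n \<zeta> \<longleftrightarrow> (\<exists>s. [s] \<in> act w \<zeta> \<and> t = edge_sym n (act w \<zeta>) s)"
proof
  assume m: "gmult [t] (phi n \<zeta> w) \<in> phiset n \<zeta>"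
  have rw: "reduced w" using Cset_reduced[OF z w] .
  show "\<exists>s. [s] \<in> act w \<zeta> \<and> t = edge_sym n (act w \<zeta>) s"
  proof (cases "phi n \<zeta> w \<noteq> [] \<and> hd (phi n \<zeta> w) = ginv t")
    case True
    then obtain s0 w' where w': "w = s0 # w'" by (cases w) auto
    have "gmult [ginv s0] w = w'" using rw w' by (simp add: gmult_single)
    moreover have "w' \<in> \<zeta>" using Cset_Cons[OF z] w w' by blast
    ultimately have "[ginv s0] \<in> act w \<zeta>" using singleton_act_iff[OF z] by simp
    moreover have "t = edge_sym n (act w \<zeta>) (ginv s0)"
      using True w' \<open>gmult [ginv s0] w = w'\<close> by (simp add: act_act) (metis ginv_bsym ginv_ginv)
    ultimately show ?thesis by blast
  next
    case False
    then have "gmult [t] (phi n \<zeta> w) = t # phi n \<zeta> w"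
      using reduced_phi[OF rw] by (auto simp: gmult_single)
    with m obtain v where v: "v \<in> \<zeta>" "phi n \<zeta> v = t # phi n \<zeta> w" by (auto simp: phiset_def)
    then have sv: "v = proj t # w" using map_proj_phi[of n \<zeta> v] by simp
    have r: "reduced v" using Cset_reduced[OF z v(1)] .
    then have "[proj t] \<in> act w \<zeta>" using singleton_act_iff[OF z] v(1) sv by (simp add: gmult_single_Cons)
    moreover have "t = edge_sym n (act w \<zeta>) (proj t)"
      using v sv act_Cons[of "proj t" w \<zeta>] r by simp
    ultimately show ?thesis by blast
  qed
next
  assume "\<exists>s. [s] \<in> act w \<zeta> \<and> t = edge_sym n (act w \<zeta>) s"
  then obtain s where s: "[s] \<in> act w \<zeta>" "t = edge_sym n (act w \<zeta>) s" by blast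
  have "gmult [s] w \<in> \<zeta>" using s(1) singleton_act_iff[OF z] by simp
  then show "gmult [t] (phi n \<zeta> w) \<in> phiset n \<zeta>"
    using gmult_edge_sym_phi[OF z w, of n s] s(2) unfolding phiset_def by (metis image_eqI)
qed

lemma nball_1_act_phiset:
  assumes z: "\<zeta> \<in> Cset A" and w: "w \<in> \<zeta>"
  shows "nball 1 (act (phi n \<zeta> w) (phiset n \<zeta>)) = nball 1 (phiset n (act w \<zeta>))"
proof (rule nball_1_eqI)
  have \<eta>: "phiset n \<zeta> \<in> Cset (Alph n A)" using phiset_Cset[OF z] .
  have pw: "phi n \<zeta> w \<in> phiset n \<zeta>" using w by (simp add: phiset_def)
  have z': "act w \<zeta> \<in> Cset A" using act_Cset[OF z w] .
  show "[] \<in> act (phi n \<zeta> w) (phiset n \<zeta>)" using Cset_Nil[OF act_Cset[OF \<eta> pw]] .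
  show "[] \<in> phiset n (act w \<zeta>)" using Cset_Nil[OF phiset_Cset[OF z']] .
  show "[t] \<in> act (phi n \<zeta> w) (phiset n \<zeta>) \<longleftrightarrow> [t] \<in> phiset n (act w \<zeta>)" for t
    using singleton_act_iff[OF \<eta>] gmult_phi_mem_iff[OF z w]
      singleton_mem_phiset[OF z'] by simp
qed

lemma locally_in_phiset:
  assumes "\<zeta> \<in> Cset A"
  shows "locally_in 1 (phiset n ` Cset A) (phiset n \<zeta>)"
  unfolding locally_in_def
proof
  fix \<alpha> assume "\<alpha> \<in> phiset n \<zeta>"
  then obtain w where "w \<in> \<zeta>" "\<alpha> = phi n \<zeta> w" by (auto simp: phiset_def)
  then show "nball 1 (act \<alpha> (phiset n \<zeta>)) \<in> nball 1 ` phiset n ` Cset A"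
    using nball_1_act_phiset[OF assms] act_Cset[OF assms] by blast
qed

subsection \<open>Reconstruction from locally admissible configurations\<close>

context
  fixes n :: nat and A :: "'a set" and \<eta> :: "'a sym gen list set"
  assumes \<eta>_Cset: "\<eta> \<in> Cset (Alph n A)"
    and \<eta>_local: "locally_in 1 (phiset n ` Cset A) \<eta>"
begin

lemma \<eta>_reduced: "b \<in> \<eta> \<Longrightarrow> reduced b"
  using Cset_reduced[OF \<eta>_Cset] .

lemma \<eta>_edge_iff: "[t] \<in> act \<beta> \<eta> \<longleftrightarrow> gmult [t] \<beta> \<in> \<eta>"
  using singleton_act_iff[OF \<eta>_Cset] .

lemma local_model: "\<beta> \<in> \<eta> \<Longrightarrow> \<exists>\<zeta>\<in>Cset A. nball 1 (act \<beta> \<eta>) = nball 1 (phiset n \<zeta>)"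
  using \<eta>_local by (auto simp: locally_in_def)

lemma model_edge_iff:
  assumes z: "\<zeta> \<in> Cset A" and L: "nball 1 (act \<beta> \<eta>) = nball 1 (phiset n \<zeta>)"
  shows "[t] \<in> act \<beta> \<eta> \<longleftrightarrow> [proj t] \<in> \<zeta> \<and> t = edge_sym n \<zeta> (proj t)"
proof -
  have "[t] \<in> act \<beta> \<eta> \<longleftrightarrow> [t] \<in> phiset n \<zeta>"
    using L by (metis singleton_mem_nball_1)
  also have "\<dots> \<longleftrightarrow> [proj t] \<in> \<zeta> \<and> t = edge_sym n \<zeta> (proj t)"
    unfolding singleton_mem_phiset[OF z] by (metis proj_bsym)
  finally show ?thesis .
qed

lemma edge_proj_inj:
  assumes b: "\<beta> \<in> \<eta>" and "[t1] \<in> act \<beta> \<eta>" "[t2] \<in> act \<beta> \<eta>" "proj t1 = proj t2"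
  shows "t1 = t2"
  using local_model[OF b] model_edge_iff assms by metis

lemma Cons_edge: "t # \<beta> \<in> \<eta> \<Longrightarrow> [t] \<in> act \<beta> \<eta>"
  using \<eta>_edge_iff \<eta>_reduced by (simp add: gmult_single_Cons)

lemma Cons_back_edge: "t # \<beta> \<in> \<eta> \<Longrightarrow> [ginv t] \<in> act (t # \<beta>) \<eta>"
  using \<eta>_edge_iff \<eta>_reduced Cset_Cons[OF \<eta>_Cset] by (simp add: gmult_single)

lemma edge_reverse: "[t] \<in> act \<beta> \<eta> \<Longrightarrow> \<beta> \<in> \<eta> \<Longrightarrow> [ginv t] \<in> act (gmult [t] \<beta>) \<eta>"
  using \<eta>_edge_iff by (simp add: gmult_assoc[symmetric] gmult_Nil_left \<eta>_reduced)

text \<open>The reverse edge carries the same label, read from the other end.\<close>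

lemma model_step_nball:
  assumes b: "\<beta> \<in> \<eta>" and t: "[t] \<in> act \<beta> \<eta>"
    and z: "\<zeta> \<in> Cset A" "nball 1 (act \<beta> \<eta>) = nball 1 (phiset n \<zeta>)"
    and z1: "\<zeta>1 \<in> Cset A" "nball 1 (act (gmult [t] \<beta>) \<eta>) = nball 1 (phiset n \<zeta>1)"
  shows "nball n \<zeta>1 = nball n (act [proj t] \<zeta>)"
proof -
  have "ginv t = edge_sym n \<zeta>1 (proj (ginv t))"
    using model_edge_iff[OF z1] edge_reverse[OF t b] by blast
  moreover have "ginv t = bsym (nball n \<zeta>) (ginv (proj t)) (nball n (act [proj t] \<zeta>))"
    using model_edge_iff[OF z] t ginv_bsym by metis
  ultimately show ?thesis by (simp add: bsym_inj)
qed

lemma reduced_map_proj: "\<delta> \<in> \<eta> \<Longrightarrow> reduced (map proj \<delta>)"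
proof (induction \<delta>)
  case (Cons t \<delta>')
  have d': "\<delta>' \<in> \<eta>" using Cset_Cons[OF \<eta>_Cset Cons.prems] .
  have "\<delta>' = [] \<or> hd (map proj \<delta>') \<noteq> ginv (proj t)"
  proof (rule ccontr)
    assume "\<not> ?thesis"
    then obtain c r where cr: "\<delta>' = c # r" "proj c = ginv (proj t)" by (cases \<delta>') auto
    have "[ginv c] \<in> act \<delta>' \<eta>" using Cons_back_edge d' cr by simp
    then have "ginv c = t"
      using edge_proj_inj[OF d' _ Cons_edge[OF Cons.prems]] cr by (simp add: proj_ginv)
    then show False using \<eta>_reduced[OF Cons.prems] cr by (auto simp: reduced_Cons)
  qed
  then show ?case using Cons.IH[OF d'] by (auto simp: reduced_Cons)
qed simp

lemma inj_on_map_proj: "inj_on (map proj) \<eta>"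
proof (rule inj_onI)
  show "\<delta> = \<beta>" if "\<delta> \<in> \<eta>" "\<beta> \<in> \<eta>" "map proj \<delta> = map proj \<beta>" for \<delta> \<beta>
    using that
  proof (induction \<delta> arbitrary: \<beta>)
    case (Cons t \<delta>')
    then obtain t' \<beta>' where b: "\<beta> = t' # \<beta>'" by (cases \<beta>) auto
    have d': "\<delta>' \<in> \<eta>" using Cset_Cons[OF \<eta>_Cset Cons.prems(1)] .
    have "\<delta>' = \<beta>'" using Cons.IH[OF d'] Cset_Cons[OF \<eta>_Cset] Cons.prems b by auto
    moreover have "t = t'"
      using edge_proj_inj[OF d' Cons_edge[OF Cons.prems(1)]] Cons_edge Cons.prems b \<open>\<delta>' = \<beta>'\<close>
      by auto
    ultimately show ?case using b by simp
  qed simp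
qed

lemma proj_image_Cset: "map proj ` \<eta> \<in> Cset A"
proof (rule CsetI)
  show "map proj ` \<eta> \<subseteq> words A"
  proof
    fix x assume "x \<in> map proj ` \<eta>"
    then obtain \<delta> where d: "\<delta> \<in> \<eta>" "x = map proj \<delta>" by blast
    have "fst ` set \<delta> \<subseteq> Alph n A" using Cset_words[OF \<eta>_Cset] d by (auto simp: words_def)
    then have "fst ` set x \<subseteq> A" using d by (auto simp: proj_def ball_alph_def)
    then show "x \<in> words A" using reduced_map_proj[OF d(1)] d by (simp add: words_def)
  qed
  show "[] \<in> map proj ` \<eta>" using Cset_Nil[OF \<eta>_Cset] by force
  show "drop k w \<in> map proj ` \<eta>" if "w \<in> map proj ` \<eta>" for w k
    using that Cset_drop[OF \<eta>_Cset] by (auto simp: drop_map)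
qed

lemma proj_gmult_edge:
  assumes b: "\<beta> \<in> \<eta>" and t: "[t] \<in> act \<beta> \<eta>"
  shows "gmult [proj t] (map proj \<beta>) = map proj (gmult [t] \<beta>)"
proof -
  have "hd \<beta> = ginv t \<longleftrightarrow> proj (hd \<beta>) = ginv (proj t)" if ne: "\<beta> \<noteq> []"
  proof
    assume h: "proj (hd \<beta>) = ginv (proj t)"
    obtain c r where cr: "\<beta> = c # r" using ne by (cases \<beta>) auto
    have "ginv c = t"
      using edge_proj_inj[OF b _ t] Cons_back_edge b cr h by (simp add: proj_ginv)
    then show "hd \<beta> = ginv t" using cr by auto
  qed (simp add: proj_ginv)
  then show ?thesis using \<eta>_reduced[OF b] reduced_map_proj[OF b]
    by (cases \<beta>) (auto simp: gmult_single)
qed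

lemma proj_edge_lift:
  assumes b: "\<beta> \<in> \<eta>" and m: "gmult [s] (map proj \<beta>) \<in> map proj ` \<eta>"
  shows "\<exists>t. [t] \<in> act \<beta> \<eta> \<and> proj t = s"
proof (cases "\<beta> \<noteq> [] \<and> proj (hd \<beta>) = ginv s")
  case True
  then obtain c r where cr: "\<beta> = c # r" by (cases \<beta>) auto
  then have "[ginv c] \<in> act \<beta> \<eta>" using Cons_back_edge b by simp
  moreover have "proj (ginv c) = s" using True cr by (simp add: proj_ginv)
  ultimately show ?thesis by blast
next
  case False
  then have "gmult [s] (map proj \<beta>) = s # map proj \<beta>"
    using reduced_map_proj[OF b] by (cases \<beta>) (auto simp: gmult_single)
  with m obtain t \<delta>' where d: "t # \<delta>' \<in> \<eta>" "proj t = s" "map proj \<delta>' = map proj \<beta>"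
    by (auto simp: Cons_eq_map_conv)
  then have "\<delta>' = \<beta>" using inj_on_map_proj Cset_Cons[OF \<eta>_Cset] b by (metis inj_onD)
  then show ?thesis using Cons_edge d by blast
qed

lemma proj_image_edge_iff:
  assumes b: "\<beta> \<in> \<eta>" and z: "\<zeta> \<in> Cset A" "nball 1 (act \<beta> \<eta>) = nball 1 (phiset n \<zeta>)"
  shows "[s] \<in> act (map proj \<beta>) (map proj ` \<eta>) \<longleftrightarrow> [s] \<in> \<zeta>"
proof -
  have "[s] \<in> act (map proj \<beta>) (map proj ` \<eta>) \<longleftrightarrow> gmult [s] (map proj \<beta>) \<in> map proj ` \<eta>"
    using singleton_act_iff[OF proj_image_Cset] .
  also have "\<dots> \<longleftrightarrow> [s] \<in> \<zeta>"
  proof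
    assume "gmult [s] (map proj \<beta>) \<in> map proj ` \<eta>"
    then show "[s] \<in> \<zeta>" using proj_edge_lift[OF b] model_edge_iff[OF z] by blast
  next
    assume "[s] \<in> \<zeta>"
    then have t: "[edge_sym n \<zeta> s] \<in> act \<beta> \<eta>" using model_edge_iff[OF z] by simp
    then have "map proj (gmult [edge_sym n \<zeta> s] \<beta>) \<in> map proj ` \<eta>" using \<eta>_edge_iff by blast
    then show "gmult [s] (map proj \<beta>) \<in> map proj ` \<eta>" using proj_gmult_edge[OF b t] by simp
  qed
  finally show ?thesis .
qed

lemma nball_act_proj_image:
  "k \<le> n \<Longrightarrow> \<beta> \<in> \<eta> \<Longrightarrow> \<zeta> \<in> Cset A \<Longrightarrow> nball 1 (act \<beta> \<eta>) = nball 1 (phiset n \<zeta>)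
   \<Longrightarrow> nball k (act (map proj \<beta>) (map proj ` \<eta>)) = nball k \<zeta>"
proof (induction k arbitrary: \<beta> \<zeta>)
  case 0
  have "[] \<in> act (map proj \<beta>) (map proj ` \<eta>)"
    using Cset_Nil[OF act_Cset[OF proj_image_Cset]] 0 by blast
  then show ?case using Cset_Nil[OF 0(3)] by (auto simp: nball_def)
next
  case (Suc k)
  note b = Suc.prems(2) and z = Suc.prems(3,4)
  let ?\<xi> = "map proj ` \<eta>"
  have Z: "act (map proj \<beta>) ?\<xi> \<in> Cset A" using act_Cset[OF proj_image_Cset] b by blast
  show ?case
  proof (rule nball_Suc_eqI[OF Z z(1) proj_image_edge_iff[OF b z]])
    fix s assume s: "[s] \<in> \<zeta>"
    let ?t = "edge_sym n \<zeta> s"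
    have t: "[?t] \<in> act \<beta> \<eta>" using model_edge_iff[OF z] s by simp
    have b1: "gmult [?t] \<beta> \<in> \<eta>" using \<eta>_edge_iff t by blast
    obtain \<zeta>1 where z1: "\<zeta>1 \<in> Cset A" "nball 1 (act (gmult [?t] \<beta>) \<eta>) = nball 1 (phiset n \<zeta>1)"
      using local_model[OF b1] by blast
    have "nball k (act [s] (act (map proj \<beta>) ?\<xi>)) = nball k (act (map proj (gmult [?t] \<beta>)) ?\<xi>)"
      using proj_gmult_edge[OF b t] by (simp add: act_act)
    also have "\<dots> = nball k \<zeta>1" using Suc.IH[OF _ b1 z1] Suc.prems(1) by simp
    also have "\<dots> = nball k (act [s] \<zeta>)"
      using model_step_nball[OF b t z z1] nball_nball[of k n \<zeta>1] nball_nball[of k n "act [s] \<zeta>"]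
        Suc.prems(1) by simp
    finally show "nball k (act [s] (act (map proj \<beta>) ?\<xi>)) = nball k (act [s] \<zeta>)" .
  qed
qed

lemma phi_proj_image: "\<beta> \<in> \<eta> \<Longrightarrow> phi n (map proj ` \<eta>) (map proj \<beta>) = \<beta>"
proof (induction \<beta>)
  case (Cons t \<beta>')
  have b': "\<beta>' \<in> \<eta>" using Cset_Cons[OF \<eta>_Cset Cons.prems] .
  have t: "[t] \<in> act \<beta>' \<eta>" using Cons_edge[OF Cons.prems] .
  have g: "gmult [t] \<beta>' = t # \<beta>'"
    using \<eta>_reduced[OF Cons.prems] by (auto simp: gmult_single reduced_Cons)
  obtain \<zeta> where z: "\<zeta> \<in> Cset A" "nball 1 (act \<beta>' \<eta>) = nball 1 (phiset n \<zeta>)"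
    using local_model[OF b'] by blast
  obtain \<zeta>1 where z1: "\<zeta>1 \<in> Cset A" "nball 1 (act (t # \<beta>') \<eta>) = nball 1 (phiset n \<zeta>1)"
    using local_model[OF Cons.prems] by blast
  have "t = edge_sym n \<zeta> (proj t)" using model_edge_iff[OF z] t by blast
  moreover have "nball n \<zeta>1 = nball n (act [proj t] \<zeta>)"
    using model_step_nball[OF b' t z] z1 g by simp
  moreover have "nball n (act (map proj \<beta>') (map proj ` \<eta>)) = nball n \<zeta>"
    using nball_act_proj_image[OF le_refl b' z] .
  moreover have "nball n (act (map proj (t # \<beta>')) (map proj ` \<eta>)) = nball n \<zeta>1"
    using nball_act_proj_image[OF le_refl Cons.prems z1] .
  ultimately show ?case using Cons.IH[OF b'] by simp
qed simp

lemma in_phiset_image: "\<eta> \<in> phiset n ` Cset A"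
proof -
  have "phiset n (map proj ` \<eta>) = \<eta>"
    using phi_proj_image by (simp add: phiset_def image_image)
  then show ?thesis using proj_image_Cset by (metis image_eqI)
qed

end

theorem lemma3:
  fixes A :: "'a set" and n :: nat
  assumes "finite A" and "n \<ge> 1"
  shows "is_step (ball_alph n A (Cset A)) 1 (phiset n ` Cset A)"
proof (rule is_stepI)
  show "finite (Alph n A)" using finite_ball_alph[OF \<open>finite A\<close>] by blast
  show "phiset n ` Cset A \<subseteq> Cset (Alph n A)" using phiset_Cset by blast
  show "locally_in 1 (phiset n ` Cset A) \<eta>" if "\<eta> \<in> phiset n ` Cset A" for \<eta>
    using that locally_in_phiset by blast
  show "\<eta> \<in> phiset n ` Cset A"
    if "\<eta> \<in> Cset (Alph n A)" "locally_in 1 (phiset n ` Cset A) \<eta>" for \<eta>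
    using in_phiset_image[OF that] .
qed

end
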